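(* Let $L>0$, let $f:\mathbb{R}^d\to\mathbb{R}$ be convex and differentiable with $L$-Lipschitz gradient, with global minimum value $f_*$. Let $x_0\in\mathbb{R}^d$, $h_0,\dots,h_{N-1}\in(0,\tfrac32]$, and $x_{i+1}=x_i-\frac{h_i}{L}\nabla f(x_i)$. Then $$\|\nabla f(x_N)\|^2\le\frac{L[f(x_0)-f(x_N)]}{\sum_{i=0}^{N-1}h_i}\quad\text{and}\quad\|\nabla f(x_N)\|^2\le\frac{L[f(x_0)-f_*]}{\tfrac12+\sum_{i=0}^{N-1}h_i}.$$ Moreover both bounds are tight: for any such $L,N,h_i$ and any $\Delta>0$ there exist a convex $f$ with $L$-Lipschitz gradient (on $\mathbb{R}$) and $x_0$ with $f(x_0)-f(x_N)=\Delta$ attaining equality in the first bound, and likewise a convex $f$ with $L$-Lipschitz gradient and $x_0$ with $f(x_0)-f_*=\Delta$ attaining equality in the second bound. *)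

theory Defs
  imports "HOL-Analysis.Analysis"
begin

end

theory Submission
  imports Defs
begin

(* Applying the interpolation inequality of L-smooth convex functions,
     f x >= f y + <g y, x - y> + |g x - g y|^2 / (2L),
   at two consecutive iterates in both orders and combining the two instances (this is where
   h_i <= 3/2 is needed) gives h_i |g x_(i+1)|^2 <= L (f x_i - f x_(i+1)) and
   |g x_(i+1)| <= |g x_i|; summing proves the first bound, and the descent estimate
   f_* <= f x_N - |g x_N|^2 / (2L) adds the 1/2 in the second. Equality holds for a linear
   function, and for a function that is quadratic left of x_N and linear to its right, since
   all iterates then see the same gradient. *)

lemma has_real_derivative_along_line:
  fixes f :: "'a::real_inner \<Rightarrow> real"
  assumes "GDERIV f (x + t *\<^sub>R d) :> D"
  shows "((\<lambda>t. f (x + t *\<^sub>R d)) has_real_derivative D \<bullet> d) (at t within S)"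
proof -
  have "((\<lambda>t. x + t *\<^sub>R d) has_derivative (\<lambda>s. s *\<^sub>R d)) (at t within S)"
    by (auto intro!: derivative_eq_intros)
  from has_derivative_compose[OF this assms[unfolded gderiv_def]]
  show ?thesis
    unfolding has_field_derivative_def
    by (rule has_derivative_eq_rhs) (auto simp: inner_commute mult.commute)
qed

lemma convex_on_along_line:
  fixes f :: "'a::real_vector \<Rightarrow> real"
  assumes "convex_on UNIV f"
  shows "convex_on UNIV (\<lambda>t::real. f (x + t *\<^sub>R d))"
proof (rule convex_onI)
  fix u s t :: real
  assume "0 < u" "u < 1"
  moreover have "x + ((1 - u) *\<^sub>R s + u *\<^sub>R t) *\<^sub>R d
      = (1 - u) *\<^sub>R (x + s *\<^sub>R d) + u *\<^sub>R (x + t *\<^sub>R d)"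
    by (simp add: algebra_simps)
  ultimately show "f (x + ((1 - u) *\<^sub>R s + u *\<^sub>R t) *\<^sub>R d)
      \<le> (1 - u) * f (x + s *\<^sub>R d) + u * f (x + t *\<^sub>R d)"
    using convex_onD[OF assms, of u] by simp
qed simp

lemma convex_on_gderiv_above_tangent:
  fixes f :: "'a::real_inner \<Rightarrow> real"
  assumes "convex_on UNIV f" and "GDERIV f y :> D"
  shows "f y + D \<bullet> (x - y) \<le> f x"
proof -
  let ?\<phi> = "\<lambda>t. f (y + t *\<^sub>R (x - y))"
  have "(?\<phi> has_real_derivative D \<bullet> (x - y)) (at 0 within UNIV)"
    using assms(2) by (intro has_real_derivative_along_line) simp
  then have "D \<bullet> (x - y) * (1 - 0) \<le> ?\<phi> 1 - ?\<phi> 0"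
    by (intro convex_on_imp_above_tangent[OF convex_on_along_line[OF assms(1)]]) auto
  then show ?thesis by simp
qed

locale L_smooth =
  fixes f :: "'a::real_inner \<Rightarrow> real" and g :: "'a \<Rightarrow> 'a" and L :: real
  assumes gradient: "GDERIV f y :> g y"
    and gradient_lipschitz: "norm (g y - g z) \<le> L * norm (y - z)"
begin

lemma quadratic_upper_bound: "f y \<le> f x + g x \<bullet> (y - x) + L / 2 * (norm (y - x))\<^sup>2"
proof -
  define d where "d = y - x"
  define \<psi> where "\<psi> t = f (x + t *\<^sub>R d) - t * (g x \<bullet> d) - L / 2 * t\<^sup>2 * (norm d)\<^sup>2" for t
  have \<psi>_deriv_nonpos: "\<exists>D. (\<psi> has_real_derivative D) (at t) \<and> D \<le> 0" if "0 \<le> t" for t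
  proof (intro exI conjI)
    show "(\<psi> has_real_derivative
        g (x + t *\<^sub>R d) \<bullet> d - g x \<bullet> d - L / 2 * (2 * t) * (norm d)\<^sup>2) (at t)"
      unfolding \<psi>_def
      by (auto intro!: derivative_eq_intros has_real_derivative_along_line[OF gradient])
    have "g (x + t *\<^sub>R d) \<bullet> d - g x \<bullet> d \<le> norm (g (x + t *\<^sub>R d) - g x) * norm d"
      by (metis inner_diff_left norm_cauchy_schwarz)
    also have "\<dots> \<le> L * norm (t *\<^sub>R d) * norm d"
      using gradient_lipschitz[of "x + t *\<^sub>R d" x] by (intro mult_right_mono) auto
    also have "\<dots> = L / 2 * (2 * t) * (norm d)\<^sup>2"
      using \<open>0 \<le> t\<close> by (simp add: power2_eq_square)
    finally show "g (x + t *\<^sub>R d) \<bullet> d - g x \<bullet> d - L / 2 * (2 * t) * (norm d)\<^sup>2 \<le> 0"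
      by simp
  qed
  have "\<psi> 1 \<le> \<psi> 0"
    by (rule DERIV_nonpos_imp_nonincreasing[of 0 1]) (auto intro: \<psi>_deriv_nonpos)
  then show ?thesis
    by (simp add: \<psi>_def d_def)
qed

lemma gradient_step_decrease:
  assumes "L > 0"
  shows "f (x - (1 / L) *\<^sub>R g x) \<le> f x - (norm (g x))\<^sup>2 / (2 * L)"
proof -
  have "f (x - (1 / L) *\<^sub>R g x) \<le> f x - (1 / L) * (norm (g x))\<^sup>2 + L / 2 * ((1 / L) * norm (g x))\<^sup>2"
    using quadratic_upper_bound[of "x - (1 / L) *\<^sub>R g x" x] \<open>L > 0\<close>
    by (simp add: power2_norm_eq_inner)
  also have "\<dots> = f x - (norm (g x))\<^sup>2 / (2 * L)"
    using \<open>L > 0\<close> by (simp add: field_simps power2_eq_square)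
  finally show ?thesis .
qed

end

locale L_smooth_convex = L_smooth +
  assumes convex: "convex_on UNIV f" and L_pos: "L > 0"
begin

text \<open>Apply the descent step to the convex function \<open>f - \<langle>g y, \<cdot>\<rangle>\<close>,
  which is minimised at \<open>y\<close>.\<close>
lemma interpolation_inequality: "f y + g y \<bullet> (x - y) + (norm (g x - g y))\<^sup>2 / (2 * L) \<le> f x"
proof -
  define \<phi> where "\<phi> z = f z - g y \<bullet> z" for z
  interpret tilted: L_smooth \<phi> "\<lambda>z. g z - g y" L
  proof
    fix z z'
    have "(\<phi> has_derivative (\<lambda>h. h \<bullet> g z - g y \<bullet> h)) (at z)"
      unfolding \<phi>_def using gradient[of z, unfolded gderiv_def]
      by (auto intro!: derivative_eq_intros)
    then show "GDERIV \<phi> z :> g z - g y"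
      unfolding gderiv_def by (rule has_derivative_eq_rhs) (auto simp: inner_diff_right inner_commute)
    show "norm ((g z - g y) - (g z' - g y)) \<le> L * norm (z - z')"
      using gradient_lipschitz by simp
  qed
  define w where "w = x - (1 / L) *\<^sub>R (g x - g y)"
  have "\<phi> y \<le> \<phi> w"
    using convex_on_gderiv_above_tangent[OF convex gradient[of y], of w]
    by (simp add: \<phi>_def inner_diff_right)
  also have "\<phi> w \<le> \<phi> x - (norm (g x - g y))\<^sup>2 / (2 * L)"
    unfolding w_def by (rule tilted.gradient_step_decrease[OF L_pos])
  finally show ?thesis
    by (simp add: \<phi>_def inner_diff_right)
qed

lemma gradient_step_bounds:
  assumes "0 < t" "t \<le> 3/2" and x': "x' = x - (t / L) *\<^sub>R g x"
  shows "t * (norm (g x'))\<^sup>2 \<le> L * (f x - f x')" and "norm (g x') \<le> norm (g x)"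
proof -
  define a b where "a = g x" and "b = g x'"
  define s D where "s = (norm (a - b))\<^sup>2" and "D = L * (f x - f x')"
  have s_expand: "s = a \<bullet> a - 2 * (a \<bullet> b) + b \<bullet> b"
    by (simp add: s_def power2_norm_eq_inner inner_diff algebra_simps inner_commute)
  have step: "x - x' = (t / L) *\<^sub>R a"
    by (simp add: x' a_def)
  have "f x' + b \<bullet> (x - x') + s / (2 * L) \<le> f x"
    unfolding a_def b_def s_def by (rule interpolation_inequality)
  then have lower: "2 * t * (a \<bullet> b) + s \<le> 2 * D"
    using L_pos by (simp add: step D_def inner_commute field_simps)
  have "f x + a \<bullet> (x' - x) + s / (2 * L) \<le> f x'"
    using interpolation_inequality[of x x'] by (simp add: a_def b_def s_def norm_minus_commute)
  moreover have "x' - x = - ((t / L) *\<^sub>R a)"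
    using step by (simp add: algebra_simps)
  ultimately have upper: "2 * D \<le> 2 * t * (a \<bullet> a) - s"
    using L_pos by (simp add: D_def field_simps)
  have "0 \<le> s"
    by (simp add: s_def)
  then have "t * s \<le> 3/2 * s"
    using \<open>t \<le> 3/2\<close> by (rule mult_right_mono[rotated])
  then have "t * (b \<bullet> b) \<le> D"
    using lower upper unfolding s_expand by (simp add: algebra_simps)
  then show "t * (norm (g x'))\<^sup>2 \<le> L * (f x - f x')"
    by (simp add: b_def D_def power2_norm_eq_inner)
  have "t * s \<le> 2 * s"
    using \<open>0 \<le> s\<close> \<open>t \<le> 3/2\<close> by (intro mult_right_mono) auto
  then have "t * (b \<bullet> b) \<le> t * (a \<bullet> a)"
    using lower upper unfolding s_expand by (simp add: algebra_simps)
  then show "norm (g x') \<le> norm (g x)"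
    using \<open>0 < t\<close> by (simp add: a_def b_def norm_le)
qed

lemma gradient_descent_bound_decrease:
  assumes h: "\<forall>i<N. 0 < h i \<and> h i \<le> 3/2"
    and x: "\<forall>i<N. x (Suc i) = x i - (h i / L) *\<^sub>R g (x i)"
  shows "(\<Sum>i<N. h i) * (norm (g (x N)))\<^sup>2 \<le> L * (f (x 0) - f (x N))"
proof -
  have "(\<Sum>i<n. h i) * (norm (g (x n)))\<^sup>2 \<le> L * (f (x 0) - f (x n))" if "n \<le> N" for n
    using that
  proof (induction n)
    case 0
    then show ?case by simp
  next
    case (Suc n)
    then have "n < N" by simp
    have "0 \<le> (\<Sum>i<n. h i)"
      using h \<open>n < N\<close> by (intro sum_nonneg) (simp add: less_imp_le)
    moreover have "h n * (norm (g (x (Suc n))))\<^sup>2 \<le> L * (f (x n) - f (x (Suc n)))"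
      and "norm (g (x (Suc n))) \<le> norm (g (x n))"
      using gradient_step_bounds[of "h n" "x (Suc n)" "x n"] h x \<open>n < N\<close> by auto
    ultimately have "(\<Sum>i<n. h i) * (norm (g (x (Suc n))))\<^sup>2
        \<le> (\<Sum>i<n. h i) * (norm (g (x n)))\<^sup>2"
      by (simp add: mult_left_mono power_mono)
    with Suc.IH \<open>n < N\<close> \<open>h n * _ \<le> _\<close> show ?case
      by (simp add: algebra_simps)
  qed
  then show ?thesis by simp
qed

lemma gradient_descent_bound_optimality_gap:
  assumes "\<forall>i<N. 0 < h i \<and> h i \<le> 3/2"
    and "\<forall>i<N. x (Suc i) = x i - (h i / L) *\<^sub>R g (x i)"
    and "\<And>y. fstar \<le> f y"
  shows "(1/2 + (\<Sum>i<N. h i)) * (norm (g (x N)))\<^sup>2 \<le> L * (f (x 0) - fstar)"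
proof -
  have "fstar \<le> f (x N) - (norm (g (x N)))\<^sup>2 / (2 * L)"
    using assms(3) gradient_step_decrease[OF L_pos] order_trans by blast
  then have "(norm (g (x N)))\<^sup>2 / 2 \<le> L * (f (x N) - fstar)"
    using L_pos by (simp add: field_simps)
  with gradient_descent_bound_decrease[OF assms(1,2)] show ?thesis
    by (simp add: algebra_simps)
qed

end

lemma L_smooth_convex_linear:
  assumes "L > 0"
  shows "L_smooth_convex (\<lambda>y::real. c * y) (\<lambda>_. c) L"
proof
  show "convex_on UNIV (\<lambda>y::real. c * y)"
    by (rule convex_on_realI[where f' = "\<lambda>_. c"]) (auto intro!: derivative_eq_intros)
qed (use assms in \<open>auto intro!: derivative_eq_intros\<close>)

definition one_sided_huber :: "real \<Rightarrow> real \<Rightarrow> real \<Rightarrow> real" where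
  "one_sided_huber L a y = (if y \<le> a then L / 2 * y\<^sup>2 else L * a * y - L * a\<^sup>2 / 2)"

lemma one_sided_huber_right:
  "a \<le> y \<Longrightarrow> one_sided_huber L a y = L * a * y - L * a\<^sup>2 / 2"
  by (auto simp: one_sided_huber_def power2_eq_square)

lemma one_sided_huber_nonneg:
  assumes "0 \<le> L" "0 \<le> a"
  shows "0 \<le> one_sided_huber L a y"
proof (cases "y \<le> a")
  case False
  then have "L * a * a \<le> L * a * y" and "0 \<le> L * a * a"
    using assms by (auto intro: mult_left_mono)
  then show ?thesis
    using False by (simp add: one_sided_huber_def power2_eq_square)
qed (use assms in \<open>simp add: one_sided_huber_def\<close>)

lemma has_real_derivative_one_sided_huber:
  "(one_sided_huber L a has_real_derivative L * min y a) (at y)"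
proof -
  have "((\<lambda>y. if y \<in> {..a} then L / 2 * y\<^sup>2 else L * a * y - L * a\<^sup>2 / 2) has_vector_derivative
      (if y \<in> {..a} then L * y else L * a)) (at y within UNIV)"
    by (rule has_vector_derivative_If_within_closures[where T = "{a<..}"])
      (auto simp flip: has_real_derivative_iff_has_vector_derivative intro!: derivative_eq_intros
        simp: power2_eq_square)
  then show ?thesis
    unfolding has_real_derivative_iff_has_vector_derivative one_sided_huber_def[abs_def] atMost_iff
    by (rule has_vector_derivative_eq_rhs) (simp add: min_def)
qed

lemma L_smooth_convex_one_sided_huber:
  assumes "L > 0"
  shows "L_smooth_convex (one_sided_huber L a) (\<lambda>y. L * min y a) L"
proof
  show "GDERIV (one_sided_huber L a) y :> L * min y a" for y
    using has_real_derivative_one_sided_huber by simp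
  show "norm (L * min y a - L * min z a) \<le> L * norm (y - z)" for y z
    using assms by (simp add: abs_mult flip: right_diff_distrib)
  show "convex_on UNIV (one_sided_huber L a)"
    using assms has_real_derivative_one_sided_huber
    by (intro convex_on_realI[where f' = "\<lambda>y. L * min y a"]) auto
qed (use assms in simp)

lemma gradient_descent_bound_decrease_tight:
  fixes L \<Delta> :: real and h :: "nat \<Rightarrow> real"
  assumes L: "L > 0" and S: "0 < (\<Sum>i<N. h i)" and "\<Delta> > 0"
  shows "\<exists>(f :: real \<Rightarrow> real) g x. L_smooth_convex f g L
    \<and> (\<forall>i<N. x (Suc i) = x i - (h i / L) *\<^sub>R g (x i))
    \<and> f (x 0) - f (x N) = \<Delta>
    \<and> (norm (g (x N)))\<^sup>2 = L * (f (x 0) - f (x N)) / (\<Sum>i<N. h i)"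
proof -
  define a where "a = sqrt (\<Delta> / (L * (\<Sum>i<N. h i)))"
  have a_sq: "L * a\<^sup>2 * (\<Sum>i<N. h i) = \<Delta>"
    using L S \<open>\<Delta> > 0\<close> by (simp add: a_def)
  define x where "x i = - a * (\<Sum>j<i. h j)" for i
  show ?thesis
  proof (intro exI conjI)
    show "L_smooth_convex (\<lambda>y. L * a * y) (\<lambda>_. L * a) L"
      using L by (rule L_smooth_convex_linear)
    show "\<forall>i<N. x (Suc i) = x i - (h i / L) *\<^sub>R (L * a)"
      using L by (simp add: x_def algebra_simps)
    show decrease: "L * a * x 0 - L * a * x N = \<Delta>"
      using a_sq by (simp add: x_def power2_eq_square algebra_simps)
    show "(norm (L * a))\<^sup>2 = L * (L * a * x 0 - L * a * x N) / (\<Sum>i<N. h i)"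
      using S by (simp flip: a_sq add: decrease power2_eq_square)
  qed
qed

lemma gradient_descent_bound_optimality_gap_tight:
  fixes L \<Delta> :: real and h :: "nat \<Rightarrow> real"
  assumes L: "L > 0" and h: "\<forall>i<N. 0 \<le> h i" and "\<Delta> > 0"
  shows "\<exists>(f :: real \<Rightarrow> real) g x fstar. L_smooth_convex f g L
    \<and> (\<exists>y. f y = fstar) \<and> (\<forall>y. fstar \<le> f y)
    \<and> (\<forall>i<N. x (Suc i) = x i - (h i / L) *\<^sub>R g (x i))
    \<and> f (x 0) - fstar = \<Delta>
    \<and> (norm (g (x N)))\<^sup>2 = L * (f (x 0) - fstar) / (1/2 + (\<Sum>i<N. h i))"
proof -
  define S where "S = (\<Sum>i<N. h i)"
  have partial_sum_le: "(\<Sum>j<i. h j) \<le> S" if "i \<le> N" for i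
    unfolding S_def using h that by (intro sum_mono2) auto
  have "0 \<le> S"
    using partial_sum_le[of 0] by simp
  define a where "a = sqrt (\<Delta> / (L * (1/2 + S)))"
  have "0 \<le> a"
    using L \<open>0 \<le> S\<close> \<open>\<Delta> > 0\<close> by (simp add: a_def)
  have a_sq: "L * a\<^sup>2 * (1/2 + S) = \<Delta>"
    using L \<open>0 \<le> S\<close> \<open>\<Delta> > 0\<close> by (simp add: a_def)
  \<comment> \<open>Start so far right of the kink \<open>a\<close> that all \<open>N\<close> steps, each of length \<open>a * h i\<close>,
    stay on the linear piece and the last one lands exactly on \<open>a\<close>.\<close>
  define x where "x i = a * (1 + S - (\<Sum>j<i. h j))" for i
  have x_right: "a \<le> x i" if "i \<le> N" for i
    using mult_left_mono[of 1 "1 + S - (\<Sum>j<i. h j)" a] partial_sum_le[OF that] \<open>0 \<le> a\<close>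
    by (simp add: x_def)
  show ?thesis
  proof (intro exI conjI)
    show "L_smooth_convex (one_sided_huber L a) (\<lambda>y. L * min y a) L"
      using L by (rule L_smooth_convex_one_sided_huber)
    show "one_sided_huber L a 0 = 0"
      using \<open>0 \<le> a\<close> by (simp add: one_sided_huber_def)
    show "\<forall>y. 0 \<le> one_sided_huber L a y"
      using L \<open>0 \<le> a\<close> by (simp add: one_sided_huber_nonneg)
    show "\<forall>i<N. x (Suc i) = x i - (h i / L) *\<^sub>R (L * min (x i) a)"
      using L x_right by (simp add: min_absorb2 x_def algebra_simps)
    show gap: "one_sided_huber L a (x 0) - 0 = \<Delta>"
      using x_right[of 0] a_sq by (simp add: one_sided_huber_right x_def power2_eq_square algebra_simps)
    have "x N = a"
      by (simp add: x_def S_def)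
    moreover have "(L * a)\<^sup>2 = L * \<Delta> / (1/2 + S)"
      using \<open>0 \<le> S\<close> by (simp flip: a_sq add: power2_eq_square)
    ultimately show "(norm (L * min (x N) a))\<^sup>2 = L * (one_sided_huber L a (x 0) - 0) / (1/2 + (\<Sum>i<N. h i))"
      using gap by (simp add: S_def)
  qed
qed

theorem proposition4p4:
  fixes L :: real and N :: nat and h :: "nat \<Rightarrow> real"
  assumes L_pos: "L > 0"
    and N_pos: "N \<ge> 1"
    and h_range: "\<forall>i<N. 0 < h i \<and> h i \<le> 3/2"
  shows
   "(\<forall>(f :: 'a::euclidean_space \<Rightarrow> real) (g :: 'a \<Rightarrow> 'a) (x :: nat \<Rightarrow> 'a) (fstar :: real).
       convex_on UNIV f
     \<and> (\<forall>y. GDERIV f y :> g y)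
     \<and> (\<forall>y z. norm (g y - g z) \<le> L * norm (y - z))
     \<and> (\<exists>y. f y = fstar) \<and> (\<forall>y. fstar \<le> f y)
     \<and> (\<forall>i<N. x (Suc i) = x i - (h i / L) *\<^sub>R g (x i))
     \<longrightarrow> (norm (g (x N)))\<^sup>2 \<le> L * (f (x 0) - f (x N)) / (\<Sum>i<N. h i)
       \<and> (norm (g (x N)))\<^sup>2 \<le> L * (f (x 0) - fstar) / (1/2 + (\<Sum>i<N. h i)))
  \<and> (\<forall>\<Delta>>0. \<exists>(f :: real \<Rightarrow> real) (g :: real \<Rightarrow> real) (x :: nat \<Rightarrow> real).
       convex_on UNIV f
     \<and> (\<forall>y. GDERIV f y :> g y)
     \<and> (\<forall>y z. norm (g y - g z) \<le> L * norm (y - z))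
     \<and> (\<forall>i<N. x (Suc i) = x i - (h i / L) *\<^sub>R g (x i))
     \<and> f (x 0) - f (x N) = \<Delta>
     \<and> (norm (g (x N)))\<^sup>2 = L * (f (x 0) - f (x N)) / (\<Sum>i<N. h i))
  \<and> (\<forall>\<Delta>>0. \<exists>(f :: real \<Rightarrow> real) (g :: real \<Rightarrow> real) (x :: nat \<Rightarrow> real) (fstar :: real).
       convex_on UNIV f
     \<and> (\<forall>y. GDERIV f y :> g y)
     \<and> (\<forall>y z. norm (g y - g z) \<le> L * norm (y - z))
     \<and> (\<exists>y. f y = fstar) \<and> (\<forall>y. fstar \<le> f y)
     \<and> (\<forall>i<N. x (Suc i) = x i - (h i / L) *\<^sub>R g (x i))
     \<and> f (x 0) - fstar = \<Delta>
     \<and> (norm (g (x N)))\<^sup>2 = L * (f (x 0) - fstar) / (1/2 + (\<Sum>i<N. h i)))"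
proof -
  have sum_pos: "0 < (\<Sum>i<N. h i)"
    using N_pos h_range by (intro sum_pos) (auto simp: lessThan_empty_iff)
  have upper_bounds: "(norm (g (x N)))\<^sup>2 \<le> L * (f (x 0) - f (x N)) / (\<Sum>i<N. h i)
      \<and> (norm (g (x N)))\<^sup>2 \<le> L * (f (x 0) - fstar) / (1/2 + (\<Sum>i<N. h i))"
    if "convex_on UNIV f" "\<forall>y. GDERIV f y :> g y" "\<forall>y z. norm (g y - g z) \<le> L * norm (y - z)"
      "\<forall>y. fstar \<le> f y" "\<forall>i<N. x (Suc i) = x i - (h i / L) *\<^sub>R g (x i)"
    for f :: "'a::euclidean_space \<Rightarrow> real" and g x fstar
  proof -
    interpret L_smooth_convex f g L
      using that L_pos by unfold_locales auto
    show ?thesis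
      using gradient_descent_bound_decrease[OF h_range that(5)]
        gradient_descent_bound_optimality_gap[OF h_range that(5)] that(4) sum_pos
      by (simp add: pos_le_divide_eq mult.commute)
  qed
  have "\<forall>i<N. 0 \<le> h i"
    using h_range by (simp add: less_imp_le)
  note tight = gradient_descent_bound_decrease_tight[OF L_pos sum_pos]
    gradient_descent_bound_optimality_gap_tight[OF L_pos this]
  note tight_unfolded = tight[unfolded L_smooth_convex_def L_smooth_def L_smooth_convex_axioms_def]
  show ?thesis
    apply (intro conjI allI impI)
    subgoal using upper_bounds by blast
    subgoal using upper_bounds by blast
    subgoal using tight_unfolded(1) by blast
    subgoal using tight_unfolded(2) by blast
    done
qed

end
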